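(* Let $e^{-1}<p\leq 1$ and let $\bar Q=(\bar q_{j,k})_{j,k\geq1}$ be the generator on $\mathbb N=\{1,2,\dots\}$ with $\bar q_{j,k}=\binom{j-1}{k-1}p^k(1-p)^{j-k}$ for $1\leq k\leq j-1$, $\bar q_{j,j+1}=(j+1)p$, $\bar q_{j,j}=p^j-(2+j)p$, and $\bar q_{j,k}=0$ otherwise. Then the Markov chain with generator $\bar Q$ is transient. *)

theory Defs
  imports Complex_Main
begin

text \<open>The generator Qbar on the state space {1,2,...} (encoded as naturals \<ge> 1).\<close>
definition qbar :: "real \<Rightarrow> nat \<Rightarrow> nat \<Rightarrow> real" where
  "qbar p j k =
     (if 1 \<le> k \<and> k \<le> j - 1 then real ((j - 1) choose (k - 1)) * p ^ k * (1 - p) ^ (j - k)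
      else if k = j + 1 then real (j + 1) * p
      else if k = j then p ^ j - real (2 + j) * p
      else 0)"

text \<open>Jump (embedded) chain of a conservative generator Q: P(j,k) = q(j,k)/q(j) for k \<noteq> j,
  with absorbing convention when q(j) = 0.\<close>
definition jump_matrix :: "(nat \<Rightarrow> nat \<Rightarrow> real) \<Rightarrow> nat \<Rightarrow> nat \<Rightarrow> real" where
  "jump_matrix Q j k =
     (if Q j j = 0 then (if k = j then 1 else 0)
      else if k = j then 0 else Q j k / (- Q j j))"

text \<open>hit P i n x: probability, for the discrete chain with transition matrix P started at x,
  that the first visit to i happens exactly at step n.\<close>
primrec hit :: "(nat \<Rightarrow> nat \<Rightarrow> real) \<Rightarrow> nat \<Rightarrow> nat \<Rightarrow> nat \<Rightarrow> real" where
  "hit P i 0 x = (if x = i then 1 else 0)"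
| "hit P i (Suc n) x = (if x = i then 0 else (\<Sum>k. P x k * hit P i n k))"

text \<open>Return probability P_i(T_i < \<infinity>), T_i = inf{n \<ge> 1. X_n = i}.\<close>
definition return_prob :: "(nat \<Rightarrow> nat \<Rightarrow> real) \<Rightarrow> nat \<Rightarrow> real" where
  "return_prob P i = (\<Sum>n. \<Sum>k. P i k * hit P i n k)"

text \<open>A continuous-time chain with generator Q on {1,2,...} is transient iff every state is
  transient, i.e. (equivalently) transient for the jump chain: return probability < 1.\<close>
definition ctmc_transient :: "(nat \<Rightarrow> nat \<Rightarrow> real) \<Rightarrow> bool" where
  "ctmc_transient Q \<longleftrightarrow> (\<forall>i\<ge>1. return_prob (jump_matrix Q) i < 1)"

end

theory Submission
  imports Defs "HOL-Analysis.Analysis"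
begin

text \<open>
  Transience follows from a Lyapunov function for the jump chain. If \<open>f > 0\<close> and
  \<open>P f < f\<close> on the whole state space, then by induction on the time horizon the probability
  of reaching \<open>i\<close> from \<open>x\<close> is at most \<open>f x / f i\<close>, so the return probability to \<open>i\<close> is at
  most \<open>(P f) i / f i < 1\<close>.

  For \<open>qbar\<close> take \<open>f k = \<integral>\<^sub>0\<^sup>1 (1 - v\<^sup>m)\<^sup>k\<^sup>-\<^sup>1 dv\<close>. Integration by parts gives
  \<open>f (n + 2) / f (n + 1) = (n + 1) m / ((n + 1) m + 1)\<close>, and by the binomial theorem the
  binomial weights of the downward jumps from \<open>n + 1\<close> average \<open>f\<close> to
  \<open>\<integral>\<^sub>0\<^sup>1 (1 - p v\<^sup>m)\<^sup>n dv\<close>, which a change of variables bounds by \<open>(1 + 1/m) f (n + 1)\<close>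
  once \<open>(m / (m + 1))\<^sup>m \<le> p\<close>. As \<open>(m / (m + 1))\<^sup>m\<close> tends to \<open>e\<^sup>-\<^sup>1 < p\<close>, such an \<open>m \<ge> 2\<close>
  exists, and for it the two estimates make the drift \<open>Q f\<close> negative at every state.
\<close>

locale nonneg_finite_rows =
  fixes P :: "nat \<Rightarrow> nat \<Rightarrow> real" and S :: "nat set"
  assumes nonneg: "x \<in> S \<Longrightarrow> 0 \<le> P x k"
    and closed: "x \<in> S \<Longrightarrow> P x k \<noteq> 0 \<Longrightarrow> k \<in> S"
    and finite_row: "x \<in> S \<Longrightarrow> finite {k. P x k \<noteq> 0}"
begin

lemma suminf_row:
  assumes "x \<in> S"
  shows "(\<Sum>k. P x k * a k) = (\<Sum>k | P x k \<noteq> 0. P x k * a k)"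
  by (rule suminf_finite[OF finite_row[OF assms]]) auto

lemma hit_nonneg: "x \<in> S \<Longrightarrow> 0 \<le> hit P i n x"
proof (induction n arbitrary: x)
  case (Suc n)
  then show ?case
    using nonneg closed by (auto simp: suminf_row intro!: sum_nonneg)
qed simp

lemma sum_hit_le:
  assumes pos: "\<And>x. x \<in> S \<Longrightarrow> 0 < f x"
    and super: "\<And>x. x \<in> S \<Longrightarrow> x \<noteq> i \<Longrightarrow> (\<Sum>k. P x k * f k) \<le> f x"
    and "i \<in> S"
  shows "x \<in> S \<Longrightarrow> (\<Sum>t<N. hit P i t x) \<le> f x / f i"
proof (induction N arbitrary: x)
  case 0
  then show ?case using pos[of x] pos[of i] \<open>i \<in> S\<close> by simp
next
  case (Suc N)
  show ?case
  proof (cases "x = i")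
    case True
    have "(\<Sum>t<Suc N. hit P i t i) = 1"
      by (simp only: sum.lessThan_Suc_shift) simp
    then show ?thesis using True pos[OF \<open>i \<in> S\<close>] by simp
  next
    case False
    let ?R = "{k. P x k \<noteq> 0}"
    have "(\<Sum>t<Suc N. hit P i t x) = (\<Sum>t<N. \<Sum>k\<in>?R. P x k * hit P i t k)"
      using False Suc.prems by (simp only: sum.lessThan_Suc_shift) (simp add: suminf_row)
    also have "\<dots> = (\<Sum>k\<in>?R. P x k * (\<Sum>t<N. hit P i t k))"
      by (subst sum.swap) (simp add: sum_distrib_left)
    also have "\<dots> \<le> (\<Sum>k\<in>?R. P x k * (f k / f i))"
      using Suc.prems by (intro sum_mono mult_left_mono Suc.IH) (auto intro: nonneg closed)
    also have "\<dots> = (\<Sum>k. P x k * f k) / f i"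
      using Suc.prems by (simp add: suminf_row sum_divide_distrib)
    also have "\<dots> \<le> f x / f i"
      using super[OF Suc.prems False] pos[OF \<open>i \<in> S\<close>] by (simp add: divide_right_mono)
    finally show ?thesis .
  qed
qed

lemma return_prob_le:
  assumes pos: "\<And>x. x \<in> S \<Longrightarrow> 0 < f x"
    and super: "\<And>x. x \<in> S \<Longrightarrow> x \<noteq> i \<Longrightarrow> (\<Sum>k. P x k * f k) \<le> f x"
    and "i \<in> S"
  shows "return_prob P i \<le> (\<Sum>k. P i k * f k) / f i"
proof -
  let ?R = "{k. P i k \<noteq> 0}"
  define a where "a = (\<lambda>n. \<Sum>k. P i k * hit P i n k)"
  have a_nonneg: "0 \<le> a n" for n
    using \<open>i \<in> S\<close> nonneg closed hit_nonneg by (auto simp: a_def suminf_row intro!: sum_nonneg)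
  have partial_sums: "(\<Sum>n<N. a n) \<le> (\<Sum>k. P i k * f k) / f i" for N
  proof -
    have "(\<Sum>n<N. a n) = (\<Sum>k\<in>?R. P i k * (\<Sum>n<N. hit P i n k))"
      using \<open>i \<in> S\<close> by (simp add: a_def suminf_row sum_distrib_left sum.swap[of _ "{..<N}"])
    also have "\<dots> \<le> (\<Sum>k\<in>?R. P i k * (f k / f i))"
      using \<open>i \<in> S\<close>
      by (intro sum_mono mult_left_mono sum_hit_le[OF pos super]) (auto intro: nonneg closed)
    also have "\<dots> = (\<Sum>k. P i k * f k) / f i"
      using \<open>i \<in> S\<close> by (simp add: suminf_row sum_divide_distrib)
    finally show ?thesis .
  qed
  have "summable a"
    by (rule summableI_nonneg_bounded[OF a_nonneg partial_sums])
  then show ?thesis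
    unfolding return_prob_def a_def[symmetric] by (rule suminf_le_const[OF _ partial_sums])
qed

corollary return_prob_less_one:
  assumes "\<And>x. x \<in> S \<Longrightarrow> 0 < f x"
    and "\<And>x. x \<in> S \<Longrightarrow> (\<Sum>k. P x k * f k) < f x"
    and "i \<in> S"
  shows "return_prob P i < 1"
proof -
  have "return_prob P i \<le> (\<Sum>k. P i k * f k) / f i"
    using assms by (intro return_prob_le) (auto intro: less_imp_le)
  also have "\<dots> < 1"
    using assms by simp
  finally show ?thesis .
qed

end

lemma suminf_jump_matrix:
  assumes "Q x x \<noteq> 0" and "finite {k. Q x k \<noteq> 0}"
  shows "(\<Sum>k. jump_matrix Q x k * f k) = f x + (\<Sum>k. Q x k * f k) / - Q x x"
proof -
  let ?R = "{k. Q x k \<noteq> 0}"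
  have "x \<in> ?R" using assms(1) by simp
  have row_sum: "(\<Sum>k. Q x k * f k) = (\<Sum>k\<in>?R. Q x k * f k)"
    using assms(2) by (rule suminf_finite) simp
  have "(\<Sum>k. jump_matrix Q x k * f k) = (\<Sum>k\<in>?R - {x}. Q x k * f k / - Q x x)"
    using assms by (subst suminf_finite[of "?R - {x}"]) (auto simp: jump_matrix_def intro!: sum.cong)
  also have "\<dots> = ((\<Sum>k\<in>?R. Q x k * f k) - Q x x * f x) / - Q x x"
    unfolding sum_divide_distrib[symmetric] using assms \<open>x \<in> ?R\<close> by (simp add: sum_diff1)
  also have "\<dots> = f x + (\<Sum>k. Q x k * f k) / - Q x x"
    using assms(1) by (simp add: row_sum diff_divide_distrib)
  finally show ?thesis .
qed

definition beta_integral :: "nat \<Rightarrow> nat \<Rightarrow> real" where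
  "beta_integral m n = integral {0..1} (\<lambda>v. (1 - v ^ m) ^ n)"

lemma has_integral_beta_integral:
  "((\<lambda>v. (1 - v ^ m) ^ n) has_integral beta_integral m n) {0..1}"
  unfolding beta_integral_def
  by (intro integrable_integral integrable_continuous_interval continuous_intros)

lemma beta_integral_0 [simp]: "beta_integral m 0 = 1"
  by (simp add: beta_integral_def)

lemma beta_integral_Suc:
  assumes "1 \<le> m"
  shows "beta_integral m (Suc n) = real (Suc n * m) / real (Suc n * m + 1) * beta_integral m n"
proof -
  define a where "a = real (Suc n * m)"
  define G where "G = (\<lambda>v::real. v * (1 - v ^ m) ^ Suc n)"
  define G' where "G' = (\<lambda>v::real. (a + 1) * (1 - v ^ m) ^ Suc n - a * (1 - v ^ m) ^ n)"
  have "(G has_vector_derivative G' v) (at v within {0..1})" for v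
  proof -
    have "(G has_real_derivative
        (1 - v ^ m) ^ Suc n + v * (real (Suc n) * (1 - v ^ m) ^ n * (0 - real m * v ^ (m - 1))))
        (at v within {0..1})"
      unfolding G_def by (rule derivative_eq_intros refl | simp)+
    moreover obtain k where "m = Suc k" using assms by (cases m) auto
    then have "(1 - v ^ m) ^ Suc n + v * (real (Suc n) * (1 - v ^ m) ^ n * (0 - real m * v ^ (m - 1)))
        = G' v"
      by (simp add: G'_def a_def algebra_simps)
    ultimately show ?thesis by (simp add: has_real_derivative_iff_has_vector_derivative)
  qed
  then have "(G' has_integral G 1 - G 0) {0..1}"
    by (intro fundamental_theorem_of_calculus) auto
  then have "(G' has_integral 0) {0..1}"
    by (simp add: G_def)
  moreover have "(G' has_integral (a + 1) * beta_integral m (Suc n) - a * beta_integral m n) {0..1}"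
    unfolding G'_def by (intro has_integral_diff has_integral_mult_right has_integral_beta_integral)
  ultimately have "(a + 1) * beta_integral m (Suc n) = a * beta_integral m n"
    by (metis has_integral_unique eq_iff_diff_eq_0)
  moreover have "0 < a + 1" by (simp add: a_def add_nonneg_pos)
  ultimately have "beta_integral m (Suc n) = a / (a + 1) * beta_integral m n"
    by (simp add: field_simps)
  then show ?thesis
    by (simp only: a_def of_nat_add of_nat_1)
qed

lemma beta_integral_pos:
  assumes "1 \<le> m"
  shows "0 < beta_integral m n"
proof (induction n)
  case (Suc n)
  have "0 < real (Suc n * m) / real (Suc n * m + 1)"
    using assms by (intro divide_pos_pos; simp only: of_nat_0_less_iff) auto
  with Suc.IH show ?case
    by (simp only: beta_integral_Suc[OF assms] mult_pos_pos)
qed simp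

lemma sum_binomial_beta_integral:
  "(\<Sum>j\<le>n. real (n choose j) * p ^ j * (1 - p) ^ (n - j) * beta_integral m j)
     = integral {0..1} (\<lambda>v. (1 - p * v ^ m) ^ n)"
proof -
  have "(1 - p * v ^ m) ^ n = (\<Sum>j\<le>n. real (n choose j) * p ^ j * (1 - p) ^ (n - j) * (1 - v ^ m) ^ j)"
    for v :: real
  proof -
    have "(1 - p * v ^ m) ^ n = (p * (1 - v ^ m) + (1 - p)) ^ n"
      by (simp add: algebra_simps)
    also have "\<dots> = (\<Sum>j\<le>n. real (n choose j) * (p * (1 - v ^ m)) ^ j * (1 - p) ^ (n - j))"
      by (simp add: binomial_ring)
    finally show ?thesis
      by (simp add: power_mult_distrib ac_simps)
  qed
  moreover have "((\<lambda>v. \<Sum>j\<le>n. real (n choose j) * p ^ j * (1 - p) ^ (n - j) * (1 - v ^ m) ^ j)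
      has_integral (\<Sum>j\<le>n. real (n choose j) * p ^ j * (1 - p) ^ (n - j) * beta_integral m j)) {0..1}"
    by (intro has_integral_sum finite_atMost has_integral_mult_right has_integral_beta_integral)
  ultimately show ?thesis
    by (simp add: integral_unique)
qed

lemma integral_le_beta_integral:
  assumes "0 < c" "c \<le> 1" "c ^ m \<le> p" "p \<le> 1"
  shows "integral {0..1} (\<lambda>v. (1 - p * v ^ m) ^ n) \<le> beta_integral m n / c"
proof -
  define f where "f = (\<lambda>t::real. (1 - t ^ m) ^ n)"
  have f_int: "(f has_integral integral {0..c} f) {0..c}"
    unfolding f_def by (intro integrable_integral integrable_continuous_interval continuous_intros)
  have "(\<lambda>x. x / c) ` {0..c} = {0..1}"
    using assms(1) by (auto simp: image_iff field_simps intro: bexI[of _ "c * _"])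
  then have "((\<lambda>v. f (c * v)) has_integral integral {0..c} f / c) {0..1}"
    using has_integral_stretch_real[OF f_int, of c] assms(1) by simp
  then have stretch: "integral {0..1} (\<lambda>v. f (c * v)) = integral {0..c} f / c"
    by (rule integral_unique)
  have "integral {0..1} (\<lambda>v. (1 - p * v ^ m) ^ n) \<le> integral {0..1} (\<lambda>v. f (c * v))"
  proof (rule integral_le)
    show "(\<lambda>v. (1 - p * v ^ m) ^ n) integrable_on {0..1}"
      by (intro integrable_continuous_interval continuous_intros)
    show "(\<lambda>v. f (c * v)) integrable_on {0..1}"
      unfolding f_def by (intro integrable_continuous_interval continuous_intros)
    fix v :: real assume "v \<in> {0..1}"
    then have "0 \<le> v ^ m" "v ^ m \<le> 1" by (auto simp: power_le_one)
    moreover have "c ^ m * v ^ m \<le> p * v ^ m" using assms(3) \<open>0 \<le> v ^ m\<close> by (rule mult_right_mono)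
    ultimately show "(1 - p * v ^ m) ^ n \<le> f (c * v)"
      unfolding f_def using assms(4) by (intro power_mono) (auto simp: power_mult_distrib mult_le_one)
  qed
  also have "\<dots> \<le> beta_integral m n / c"
  proof -
    have "integral {0..c} f \<le> beta_integral m n"
    proof (rule has_integral_subset_le[OF _ f_int])
      show "{0..c} \<subseteq> {0..1}" using assms(2) by auto
      show "(f has_integral beta_integral m n) {0..1}"
        unfolding f_def by (rule has_integral_beta_integral)
    qed (auto simp: f_def power_le_one)
    then show ?thesis
      unfolding stretch using assms(1) by (simp add: divide_right_mono)
  qed
  finally show ?thesis .
qed

lemma qbar_diag: "1 \<le> j \<Longrightarrow> qbar p j j = p ^ j - real (2 + j) * p"
  by (simp add: qbar_def)

lemma qbar_up: "qbar p j (Suc j) = real (Suc j) * p"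
  by (auto simp: qbar_def)

lemma qbar_diag_neg:
  assumes "0 < p" "p \<le> 1" "1 \<le> j"
  shows "qbar p j j < 0"
proof -
  have "p ^ j \<le> p" using power_decreasing[of 1 j p] assms by simp
  moreover have "3 * p \<le> real (2 + j) * p" using assms by (intro mult_right_mono) auto
  ultimately show ?thesis unfolding qbar_diag[OF assms(3)] using assms(1) by linarith
qed

lemma qbar_nonneg: "0 \<le> p \<Longrightarrow> p \<le> 1 \<Longrightarrow> k \<noteq> j \<Longrightarrow> 0 \<le> qbar p j k"
  by (auto simp: qbar_def)

lemma qbar_nonzero: "qbar p j k \<noteq> 0 \<Longrightarrow> k \<le> j + 1 \<and> (1 \<le> k \<or> j = 0)"
  by (auto simp: qbar_def split: if_splits)

lemma finite_qbar_row: "finite {k. qbar p j k \<noteq> 0}"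
  by (rule finite_subset[of _ "{..j + 1}"]) (auto dest: qbar_nonzero)

lemma nonneg_finite_rows_jump_matrix_qbar:
  assumes "0 < p" "p \<le> 1"
  shows "nonneg_finite_rows (jump_matrix (qbar p)) {1..}"
proof
  fix x k assume "x \<in> {1::nat..}"
  then have diag: "qbar p x x < 0" using qbar_diag_neg assms by simp
  show "0 \<le> jump_matrix (qbar p) x k"
    using diag qbar_nonneg[of p k x] assms by (auto simp: jump_matrix_def intro: divide_nonneg_neg)
  show "jump_matrix (qbar p) x k \<noteq> 0 \<Longrightarrow> k \<in> {1..}"
    using diag \<open>x \<in> {1..}\<close> by (auto simp: jump_matrix_def split: if_splits dest: qbar_nonzero)
  show "finite {k. jump_matrix (qbar p) x k \<noteq> 0}"
    by (rule finite_subset[OF _ finite_qbar_row[of p x]]) (use diag in \<open>auto simp: jump_matrix_def\<close>)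
qed

lemma suminf_qbar:
  "(\<Sum>k. qbar p (Suc n) k * g k) =
     p * ((\<Sum>j\<le>n. real (n choose j) * p ^ j * (1 - p) ^ (n - j) * g (Suc j))
          + real (n + 2) * g (n + 2) - real (n + 3) * g (Suc n))"
proof -
  have "(\<Sum>k. qbar p (Suc n) k * g k) = (\<Sum>k<Suc (Suc (Suc n)). qbar p (Suc n) k * g k)"
    by (rule suminf_finite) (use qbar_nonzero[of p "Suc n"] in fastforce)+
  also have "\<dots> = (\<Sum>j<n. qbar p (Suc n) (Suc j) * g (Suc j))
      + qbar p (Suc n) (Suc n) * g (Suc n) + qbar p (Suc n) (Suc (Suc n)) * g (n + 2)"
    by (subst sum.lessThan_Suc_shift) (simp add: qbar_def)
  also have "(\<Sum>j<n. qbar p (Suc n) (Suc j) * g (Suc j))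
      = p * (\<Sum>j<n. real (n choose j) * p ^ j * (1 - p) ^ (n - j) * g (Suc j))"
    by (simp add: sum_distrib_left qbar_def mult_ac)
  finally show ?thesis
    by (simp add: qbar_diag qbar_up lessThan_Suc_atMost[symmetric] algebra_simps)
qed

lemma drift_beta_integral_neg:
  assumes "2 \<le> m" "0 < p" "p \<le> 1" "(real m / (real m + 1)) ^ m \<le> p"
  shows "(\<Sum>j\<le>n. real (n choose j) * p ^ j * (1 - p) ^ (n - j) * beta_integral m j)
           + real (n + 2) * beta_integral m (Suc n) < real (n + 3) * beta_integral m n"
proof -
  define B where "B = beta_integral m n"
  define a where "a = real (Suc n * m)"
  have "0 < B" unfolding B_def using assms(1) by (intro beta_integral_pos) simp
  have "(\<Sum>j\<le>n. real (n choose j) * p ^ j * (1 - p) ^ (n - j) * beta_integral m j)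
      \<le> B / (real m / (real m + 1))"
    unfolding sum_binomial_beta_integral B_def
    using assms by (intro integral_le_beta_integral) auto
  also have "\<dots> = (1 + 1 / real m) * B"
    using assms(1) by (simp add: field_simps)
  finally have mixture: "(\<Sum>j\<le>n. real (n choose j) * p ^ j * (1 - p) ^ (n - j) * beta_integral m j)
      \<le> (1 + 1 / real m) * B" .
  have "0 \<le> a" by (simp add: a_def)
  have "beta_integral m (Suc n) = a / (a + 1) * B"
    unfolding a_def B_def using beta_integral_Suc[of m n] assms(1) by simp
  also have "a / (a + 1) = 1 - 1 / (a + 1)"
    using \<open>0 \<le> a\<close> by (simp add: field_simps)
  finally have next_term: "beta_integral m (Suc n) = (1 - 1 / (a + 1)) * B" .
  have "a + 1 < real (n + 2) * real m"
    using assms(1) by (simp add: a_def algebra_simps)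
  then have "1 / real m < real (n + 2) / (a + 1)"
    using assms(1) \<open>0 \<le> a\<close> by (simp add: field_simps)
  then have "(1 / real m - real (n + 2) / (a + 1)) * B < 0"
    using \<open>0 < B\<close> by (intro mult_neg_pos) simp_all
  then have "(1 + 1 / real m) * B + real (n + 2) * ((1 - 1 / (a + 1)) * B) < real (n + 3) * B"
    by (simp add: ring_distribs)
  then show ?thesis
    using mixture unfolding next_term B_def by linarith
qed

lemma eventually_ratio_power_le:
  assumes "exp (-1) < p"
  shows "\<forall>\<^sub>F m in sequentially. (real m / (real m + 1)) ^ m \<le> p"
proof -
  have "(\<lambda>m. inverse ((1 + 1 / real m) ^ m)) \<longlonglongrightarrow> inverse (exp 1)"
    using tendsto_exp_limit_sequentially[of 1] by (intro tendsto_inverse) simp_all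
  then have "\<forall>\<^sub>F m in sequentially. inverse ((1 + 1 / real m) ^ m) < p"
    using assms by (intro order_tendstoD(2)) (simp_all add: exp_minus)
  moreover have "\<forall>\<^sub>F m in sequentially. (real m / (real m + 1)) ^ m = inverse ((1 + 1 / real m) ^ m)"
    using eventually_ge_at_top[of 1]
    by eventually_elim (simp add: power_inverse[symmetric] field_simps)
  ultimately show ?thesis
    by eventually_elim simp
qed

theorem proposition8:
  fixes p :: real
  assumes "exp (-1) < p" and "p \<le> 1"
  shows "ctmc_transient (qbar p)"
proof -
  have "0 < p" using exp_gt_zero[of "-1"] assms(1) by linarith
  obtain m where m: "2 \<le> m" "(real m / (real m + 1)) ^ m \<le> p"
    using eventually_conj[OF eventually_ge_at_top[of 2] eventually_ratio_power_le[OF assms(1)]]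
    by (auto simp: eventually_sequentially)
  interpret nonneg_finite_rows "jump_matrix (qbar p)" "{1..}"
    using nonneg_finite_rows_jump_matrix_qbar[OF \<open>0 < p\<close> assms(2)] .
  define f where "f k = beta_integral m (k - 1)" for k
  have "(\<Sum>k. jump_matrix (qbar p) x k * f k) < f x" if x_state: "x \<in> {1..}" for x
  proof -
    obtain n where x: "x = Suc n" using x_state by (cases x) auto
    have "(\<Sum>k. qbar p x k * f k) < 0"
      unfolding x suminf_qbar f_def
      using drift_beta_integral_neg[OF m(1) \<open>0 < p\<close> assms(2) m(2), of n] \<open>0 < p\<close>
      by (simp add: mult_pos_neg)
    moreover have "qbar p x x < 0"
      using qbar_diag_neg[OF \<open>0 < p\<close> assms(2)] x_state by simp
    ultimately show ?thesis
      by (simp add: suminf_jump_matrix finite_qbar_row divide_neg_neg)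
  qed
  then show ?thesis
    unfolding ctmc_transient_def
    using return_prob_less_one[of f] beta_integral_pos m(1) by (auto simp: f_def)
qed

end
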